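(* Let $k=\delta n$ with $\delta = \omega(\log^{-1/3} n)$, let $G$ be a $k$-regular bipartite graph on $2n$ vertices, and let $G_1\subseteq G_2$ be as defined in the context. A.a.s. $G_1$ contains isolated vertices and $G_2$ does not. Furthermore, a.a.s. there is no pair $x,y$ of vertices that are isolated in $G_1$ with $xy\in E(G_2)$.
   Context: Set $p_1 = \frac{\log n - \log\log\log\log n}{k}$ and $p_2 = \frac{\log n + \log\log\log\log n}{k}$. For a graph $H$ and $p\in[0,1]$, $H(p)$ is the random subgraph of $H$ retaining each edge independently with probability $p$. Let $G_2\sim G(p_2)$ and $G_1\sim G_2(p_1/p_2)$. "A.a.s." means with probability tending to $1$ as $n\to\infty$. *)

theory Defs
  imports Complex_Main
begin

definition simple_graph :: "'a set \<Rightarrow> 'a set set \<Rightarrow> bool" where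
  "simple_graph V E \<longleftrightarrow> finite V \<and>
     (\<forall>e\<in>E. \<exists>x y. e = {x, y} \<and> x \<noteq> y \<and> x \<in> V \<and> y \<in> V)"

definition degree :: "'a set set \<Rightarrow> 'a \<Rightarrow> nat" where
  "degree E v = card {e\<in>E. v \<in> e}"

definition regular :: "'a set \<Rightarrow> 'a set set \<Rightarrow> nat \<Rightarrow> bool" where
  "regular V E k \<longleftrightarrow> (\<forall>v\<in>V. degree E v = k)"

definition bipartite :: "'a set \<Rightarrow> 'a set set \<Rightarrow> bool" where
  "bipartite V E \<longleftrightarrow> (\<exists>L R. L \<inter> R = {} \<and> L \<union> R = V \<and>
      (\<forall>e\<in>E. \<exists>x\<in>L. \<exists>y\<in>R. e = {x, y}))"

definition isolated :: "'a set \<Rightarrow> 'a set set \<Rightarrow> 'a \<Rightarrow> bool" where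
  "isolated V A v \<longleftrightarrow> v \<in> V \<and> (\<forall>e\<in>A. v \<notin> e)"

definition p1 :: "nat \<Rightarrow> nat \<Rightarrow> real" where
  "p1 n k = (ln (real n) - ln (ln (ln (ln (real n))))) / real k"

definition p2 :: "nat \<Rightarrow> nat \<Rightarrow> real" where
  "p2 n k = (ln (real n) + ln (ln (ln (ln (real n))))) / real k"

(* Probability of the event P(G1, G2) for the coupling G2 ~ G(q2), G1 ~ G2(q1/q2):
   each edge of E independently lies in G1 with prob. q1, in G2 \ G1 with prob. q2 - q1,
   and outside G2 with prob. 1 - q2. *)
definition coupled_prob :: "'a set set \<Rightarrow> real \<Rightarrow> real \<Rightarrow> ('a set set \<Rightarrow> 'a set set \<Rightarrow> bool) \<Rightarrow> real" where
  "coupled_prob E q1 q2 P =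
     (\<Sum>B\<in>Pow E. \<Sum>A\<in>Pow B.
        if P A B then q1 ^ card A * (q2 - q1) ^ card (B - A) * (1 - q2) ^ card (E - B) else 0)"

end

theory Submission
  imports Defs "HOL-Real_Asymp.Real_Asymp"
begin

text \<open>
  On its own, G1 is the random subgraph G(p1). With t = ln ln ln n we have exp (- p1 k) = t / n
  and exp (- p2 k) = 1 / (n t), so G1 has about 2 t isolated vertices in expectation and G2 about
  2 / t. The first moment method rules out isolated vertices in G2. In G1 the second moment method
  applies, because the edge neighbourhoods of two distinct vertices share at most one edge, which
  makes the events of being isolated almost independent. For the second claim, an edge xy of G2
  joining two vertices isolated in G1 lies in G2 - G1 while its 2k - 2 neighbouring edges all
  miss G1; this has probability (p2 - p1) (1 - p1)^(2k-2), and summing over the at most nk edges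
  gives O(t^2 ln t / n).
\<close>

section \<open>The coupled random subgraphs\<close>

definition coupled_weight :: "'a set set \<Rightarrow> real \<Rightarrow> real \<Rightarrow> 'a set set \<Rightarrow> 'a set set \<Rightarrow> real" where
  "coupled_weight E q1 q2 A B = q1 ^ card A * (q2 - q1) ^ card (B - A) * (1 - q2) ^ card (E - B)"

definition coupled_expectation ::
    "'a set set \<Rightarrow> real \<Rightarrow> real \<Rightarrow> ('a set set \<Rightarrow> 'a set set \<Rightarrow> real) \<Rightarrow> real" where
  "coupled_expectation E q1 q2 f = (\<Sum>B\<in>Pow E. \<Sum>A\<in>Pow B. coupled_weight E q1 q2 A B * f A B)"

lemma coupled_prob_eq_expectation:
  "coupled_prob E q1 q2 P = coupled_expectation E q1 q2 (\<lambda>A B. of_bool (P A B))"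
  unfolding coupled_prob_def coupled_expectation_def coupled_weight_def
  by (intro sum.cong refl) auto

lemma coupled_expectation_add:
  "coupled_expectation E q1 q2 (\<lambda>A B. f A B + g A B) =
     coupled_expectation E q1 q2 f + coupled_expectation E q1 q2 g"
  unfolding coupled_expectation_def by (simp add: distrib_left sum.distrib)

lemma coupled_expectation_diff:
  "coupled_expectation E q1 q2 (\<lambda>A B. f A B - g A B) =
     coupled_expectation E q1 q2 f - coupled_expectation E q1 q2 g"
  unfolding coupled_expectation_def by (simp add: right_diff_distrib sum_subtractf)

lemma coupled_expectation_cmult:
  "coupled_expectation E q1 q2 (\<lambda>A B. c * f A B) = c * coupled_expectation E q1 q2 f"
  unfolding coupled_expectation_def by (simp add: sum_distrib_left mult.left_commute)

lemma coupled_expectation_sum: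
  "coupled_expectation E q1 q2 (\<lambda>A B. \<Sum>i\<in>I. f i A B) = (\<Sum>i\<in>I. coupled_expectation E q1 q2 (f i))"
  unfolding coupled_expectation_def by (simp add: sum_distrib_left sum.swap[of _ I])

lemma coupled_expectation_cong:
  assumes "\<And>A B. A \<subseteq> B \<Longrightarrow> B \<subseteq> E \<Longrightarrow> f A B = g A B"
  shows "coupled_expectation E q1 q2 f = coupled_expectation E q1 q2 g"
  unfolding coupled_expectation_def using assms by (intro sum.cong refl) auto

lemma coupled_expectation_mono:
  assumes "0 \<le> q1" "q1 \<le> q2" "q2 \<le> 1"
    and "\<And>A B. A \<subseteq> B \<Longrightarrow> B \<subseteq> E \<Longrightarrow> f A B \<le> g A B"
  shows "coupled_expectation E q1 q2 f \<le> coupled_expectation E q1 q2 g"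
proof -
  have "0 \<le> coupled_weight E q1 q2 A B" for A B
    unfolding coupled_weight_def using assms(1-3) by simp
  then show ?thesis
    unfolding coupled_expectation_def using assms(4) by (intro sum_mono mult_left_mono) auto
qed

lemma coupled_expectation_prod:
  assumes "finite E"
  shows "coupled_expectation E q1 q2 (\<lambda>A B. (\<Prod>e\<in>A. x e) * (\<Prod>e\<in>B - A. y e)) =
         (\<Prod>e\<in>E. q1 * x e + (q2 - q1) * y e + (1 - q2))"
proof -
  have "(\<Prod>e\<in>E. q1 * x e + (q2 - q1) * y e + (1 - q2)) =
        (\<Sum>B\<in>Pow E. (\<Prod>e\<in>B. q1 * x e + (q2 - q1) * y e) * (\<Prod>e\<in>E - B. 1 - q2))"
    by (rule prod_add[OF assms])
  also have "\<dots> = (\<Sum>B\<in>Pow E. \<Sum>A\<in>Pow B.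
                    (\<Prod>e\<in>A. q1 * x e) * (\<Prod>e\<in>B - A. (q2 - q1) * y e) * (1 - q2) ^ card (E - B))"
  proof (intro sum.cong refl)
    fix B assume "B \<in> Pow E"
    then have "finite B" using assms finite_subset by auto
    then show "(\<Prod>e\<in>B. q1 * x e + (q2 - q1) * y e) * (\<Prod>e\<in>E - B. 1 - q2) =
      (\<Sum>A\<in>Pow B. (\<Prod>e\<in>A. q1 * x e) * (\<Prod>e\<in>B - A. (q2 - q1) * y e) * (1 - q2) ^ card (E - B))"
      by (simp add: prod_add sum_distrib_right)
  qed
  also have "\<dots> = coupled_expectation E q1 q2 (\<lambda>A B. (\<Prod>e\<in>A. x e) * (\<Prod>e\<in>B - A. y e))"
    unfolding coupled_expectation_def coupled_weight_def
  proof (intro sum.cong refl)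
    fix B A assume "B \<in> Pow E" "A \<in> Pow B"
    then have "finite B" "A \<subseteq> B" using assms finite_subset by auto
    then have "finite A" "finite (B - A)" using finite_subset by auto
    then show "(\<Prod>e\<in>A. q1 * x e) * (\<Prod>e\<in>B - A. (q2 - q1) * y e) * (1 - q2) ^ card (E - B) =
      q1 ^ card A * (q2 - q1) ^ card (B - A) * (1 - q2) ^ card (E - B) *
        ((\<Prod>e\<in>A. x e) * (\<Prod>e\<in>B - A. y e))"
      by (simp add: prod.distrib)
  qed
  finally show ?thesis by simp
qed

lemma coupled_expectation_const:
  assumes "finite E"
  shows "coupled_expectation E q1 q2 (\<lambda>A B. c) = c"
  using coupled_expectation_prod[OF assms, of q1 q2 "\<lambda>_. 1" "\<lambda>_. 1"]
    coupled_expectation_cmult[of E q1 q2 c "\<lambda>A B. 1"]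
  by simp

lemma prod_of_bool_disjoint:
  assumes "finite A"
  shows "(\<Prod>e\<in>A. of_bool (e \<notin> F)) = (of_bool (A \<inter> F = {}) :: real)"
  using assms by (induction A rule: finite_induct) auto

lemma coupled_prob_avoid:
  assumes "finite E" "H \<subseteq> F" "F \<subseteq> E"
  shows "coupled_prob E q1 q2 (\<lambda>A B. A \<inter> F = {} \<and> (B - A) \<inter> H = {}) =
         (1 - q2) ^ card H * (1 - q1) ^ card (F - H)"
proof -
  define g where "g e = (if e \<in> H then 1 - q2 else if e \<in> F then 1 - q1 else 1)" for e
  have "coupled_prob E q1 q2 (\<lambda>A B. A \<inter> F = {} \<and> (B - A) \<inter> H = {}) =
        coupled_expectation E q1 q2
          (\<lambda>A B. (\<Prod>e\<in>A. of_bool (e \<notin> F)) * (\<Prod>e\<in>B - A. of_bool (e \<notin> H)))"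
    unfolding coupled_prob_eq_expectation
  proof (rule coupled_expectation_cong)
    fix A B assume "A \<subseteq> B" "B \<subseteq> E"
    moreover have "finite B" using \<open>B \<subseteq> E\<close> assms(1) finite_subset by auto
    ultimately have "finite A" "finite (B - A)" using finite_subset by auto
    then show "(of_bool (A \<inter> F = {} \<and> (B - A) \<inter> H = {}) :: real) =
        (\<Prod>e\<in>A. of_bool (e \<notin> F)) * (\<Prod>e\<in>B - A. of_bool (e \<notin> H))"
      by (simp add: prod_of_bool_disjoint)
  qed
  also have "\<dots> = (\<Prod>e\<in>E. g e)"
    unfolding coupled_expectation_prod[OF assms(1)] g_def using assms(2)
    by (intro prod.cong refl) auto
  also have "\<dots> = (\<Prod>e\<in>F. g e)"
    using assms by (intro prod.mono_neutral_right) (auto simp: g_def)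
  also have "\<dots> = (\<Prod>e\<in>F - H. g e) * (\<Prod>e\<in>H. g e)"
    using assms finite_subset by (intro prod.subset_diff) auto
  also have "\<dots> = (1 - q2) ^ card H * (1 - q1) ^ card (F - H)"
    by (simp add: g_def)
  finally show ?thesis .
qed

lemma coupled_prob_mono:
  assumes "0 \<le> q1" "q1 \<le> q2" "q2 \<le> 1"
    and "\<And>A B. A \<subseteq> B \<Longrightarrow> B \<subseteq> E \<Longrightarrow> P A B \<Longrightarrow> Q A B"
  shows "coupled_prob E q1 q2 P \<le> coupled_prob E q1 q2 Q"
  unfolding coupled_prob_eq_expectation using assms
  by (intro coupled_expectation_mono) auto

lemma coupled_prob_le_one:
  assumes "finite E" "0 \<le> q1" "q1 \<le> q2" "q2 \<le> 1"
  shows "coupled_prob E q1 q2 P \<le> 1"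
proof -
  have "coupled_prob E q1 q2 P \<le> coupled_expectation E q1 q2 (\<lambda>A B. 1)"
    unfolding coupled_prob_eq_expectation using assms(2-4) by (intro coupled_expectation_mono) auto
  then show ?thesis using coupled_expectation_const[OF assms(1)] by simp
qed

lemma coupled_prob_compl:
  assumes "finite E"
  shows "coupled_prob E q1 q2 (\<lambda>A B. \<not> P A B) = 1 - coupled_prob E q1 q2 P"
proof -
  have "coupled_prob E q1 q2 (\<lambda>A B. \<not> P A B) =
        coupled_expectation E q1 q2 (\<lambda>A B. 1 - of_bool (P A B))"
    unfolding coupled_prob_eq_expectation by (intro coupled_expectation_cong) auto
  then show ?thesis
    unfolding coupled_expectation_diff coupled_expectation_const[OF assms]
      coupled_prob_eq_expectation .
qed

lemma coupled_prob_conj_not: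
  "coupled_prob E q1 q2 (\<lambda>A B. P A B \<and> \<not> Q A B) =
     coupled_prob E q1 q2 P - coupled_prob E q1 q2 (\<lambda>A B. P A B \<and> Q A B)"
proof -
  have "coupled_prob E q1 q2 (\<lambda>A B. P A B \<and> \<not> Q A B) =
        coupled_expectation E q1 q2 (\<lambda>A B. of_bool (P A B) - of_bool (P A B \<and> Q A B))"
    unfolding coupled_prob_eq_expectation by (intro coupled_expectation_cong) auto
  then show ?thesis
    unfolding coupled_expectation_diff coupled_prob_eq_expectation .
qed

lemma coupled_prob_disj_le:
  assumes "0 \<le> q1" "q1 \<le> q2" "q2 \<le> 1"
  shows "coupled_prob E q1 q2 (\<lambda>A B. P A B \<or> Q A B) \<le>
           coupled_prob E q1 q2 P + coupled_prob E q1 q2 Q"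
  unfolding coupled_prob_eq_expectation coupled_expectation_add[symmetric] using assms
  by (intro coupled_expectation_mono) auto

lemma coupled_prob_Bex_le:
  assumes "0 \<le> q1" "q1 \<le> q2" "q2 \<le> 1" "finite I"
  shows "coupled_prob E q1 q2 (\<lambda>A B. \<exists>i\<in>I. Q i A B) \<le> (\<Sum>i\<in>I. coupled_prob E q1 q2 (Q i))"
  unfolding coupled_prob_eq_expectation coupled_expectation_sum[symmetric]
proof (intro coupled_expectation_mono[OF assms(1-3)])
  fix A B
  show "of_bool (\<exists>i\<in>I. Q i A B) \<le> (\<Sum>i\<in>I. of_bool (Q i A B) :: real)"
  proof (cases "\<exists>i\<in>I. Q i A B")
    case True
    then obtain i where "i \<in> I" "Q i A B" by blast
    then show ?thesis
      using member_le_sum[of i I "\<lambda>i. of_bool (Q i A B) :: real"] assms(4) by simp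
  qed (simp add: sum_nonneg)
qed

lemma coupled_prob_avoid_but_hit:
  assumes "finite E" "e \<in> F" "F \<subseteq> E"
  shows "coupled_prob E q1 q2 (\<lambda>A B. A \<inter> F = {} \<and> e \<in> B - A) =
         (q2 - q1) * (1 - q1) ^ (card F - 1)"
proof -
  have "finite F" using assms(1,3) finite_subset by auto
  then have card_F: "card F = Suc (card (F - {e}))"
    using assms(2) by (rule card.remove)
  have "coupled_prob E q1 q2 (\<lambda>A B. A \<inter> F = {} \<and> e \<in> B - A) =
        coupled_prob E q1 q2 (\<lambda>A B. A \<inter> F = {} \<and> (B - A) \<inter> {} = {}) -
        coupled_prob E q1 q2 (\<lambda>A B. A \<inter> F = {} \<and> (B - A) \<inter> {e} = {})"
    using coupled_prob_conj_not[of E q1 q2 "\<lambda>A B. A \<inter> F = {}" "\<lambda>A B. (B - A) \<inter> {e} = {}"]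
    by simp
  also have "\<dots> = (1 - q1) ^ card F - (1 - q2) * (1 - q1) ^ card (F - {e})"
    using coupled_prob_avoid[OF assms(1) empty_subsetI assms(3), of q1 q2]
      coupled_prob_avoid[OF assms(1) _ assms(3), of "{e}" q1 q2] assms(2)
    by simp
  also have "\<dots> = (q2 - q1) * (1 - q1) ^ (card F - 1)"
    unfolding card_F by (simp add: algebra_simps)
  finally show ?thesis .
qed

lemma coupled_prob_eq_zero_le_variance:
  assumes "finite E" "0 \<le> q1" "q1 \<le> q2" "q2 \<le> 1"
    and pos: "0 < coupled_expectation E q1 q2 X"
  shows "coupled_prob E q1 q2 (\<lambda>A B. X A B = 0) \<le>
           (coupled_expectation E q1 q2 (\<lambda>A B. X A B ^ 2) - coupled_expectation E q1 q2 X ^ 2) /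
           coupled_expectation E q1 q2 X ^ 2"
proof -
  define \<mu> where "\<mu> = coupled_expectation E q1 q2 X"
  have "coupled_prob E q1 q2 (\<lambda>A B. X A B = 0) \<le>
        coupled_expectation E q1 q2 (\<lambda>A B. (1 / \<mu>^2) * (X A B ^ 2 - 2 * \<mu> * X A B + \<mu>^2))"
    unfolding coupled_prob_eq_expectation
  proof (rule coupled_expectation_mono[OF assms(2-4)])
    fix A B
    have "X A B ^ 2 - 2 * \<mu> * X A B + \<mu>^2 = (X A B - \<mu>)^2"
      by (simp add: power2_eq_square algebra_simps)
    then show "of_bool (X A B = 0) \<le> (1 / \<mu>^2) * (X A B ^ 2 - 2 * \<mu> * X A B + \<mu>^2)"
      using pos unfolding \<mu>_def by auto
  qed
  also have "\<dots> = (coupled_expectation E q1 q2 (\<lambda>A B. X A B ^ 2) - \<mu> ^ 2) / \<mu> ^ 2"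
    unfolding coupled_expectation_cmult coupled_expectation_add coupled_expectation_diff
      coupled_expectation_const[OF assms(1)] \<mu>_def[symmetric]
    by (simp add: power2_eq_square)
  finally show ?thesis unfolding \<mu>_def .
qed

lemma coupled_prob_avoid_Un_le:
  fixes q1 q2 :: real
  assumes "finite E" "S \<subseteq> E" "T \<subseteq> E" "card S = k" "card T = k" "card (S \<inter> T) \<le> 1"
    and "0 \<le> q1" "q1 \<le> 1"
  shows "coupled_prob E q1 q2 (\<lambda>A B. A \<inter> (S \<union> T) = {}) \<le> (1 - q1) ^ (2 * k - 1)"
proof -
  have "finite S" "finite T" using assms(1-3) finite_subset by auto
  then have "card (S \<union> T) + card (S \<inter> T) = 2 * k"
    using card_Un_Int[of S T] assms(4,5) by simp
  then have "2 * k - 1 \<le> card (S \<union> T)" using assms(6) by simp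
  then have "(1 - q1) ^ card (S \<union> T) \<le> (1 - q1) ^ (2 * k - 1)"
    using assms(7,8) by (simp add: power_decreasing)
  then show ?thesis
    using coupled_prob_avoid[OF assms(1) empty_subsetI, of "S \<union> T" q1 q2] assms(2,3) by simp
qed

lemma coupled_expectation_missed_sq_le:
  fixes N :: "'v \<Rightarrow> 'a set set" and q1 q2 :: real
  assumes "finite E" "0 \<le> q1" "q1 < 1" "finite V" "1 \<le> k"
    and N: "\<And>v. v \<in> V \<Longrightarrow> N v \<subseteq> E \<and> card (N v) = k"
    and overlap: "\<And>u v. u \<in> V \<Longrightarrow> v \<in> V \<Longrightarrow> u \<noteq> v \<Longrightarrow> card (N u \<inter> N v) \<le> 1"
  defines "\<mu> \<equiv> card V * (1 - q1) ^ k"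
  shows "coupled_expectation E q1 q2 (\<lambda>A B. (\<Sum>v\<in>V. of_bool (A \<inter> N v = {}))\<^sup>2) \<le>
           \<mu> + \<mu>\<^sup>2 / (1 - q1)"
proof -
  define c where "c = (1 - q1) ^ (2 * k - 1)"
  have pair: "coupled_prob E q1 q2 (\<lambda>A B. A \<inter> (N u \<union> N v) = {}) \<le> (if u = v then (1 - q1) ^ k else c)"
    if "u \<in> V" "v \<in> V" for u v
  proof (cases "u = v")
    case True
    then show ?thesis using coupled_prob_avoid[OF assms(1) empty_subsetI, of "N u" q1 q2] N that by simp
  next
    case False
    then show ?thesis
      unfolding c_def using coupled_prob_avoid_Un_le[OF assms(1)] N overlap that assms(2,3) by simp
  qed
  have "coupled_expectation E q1 q2 (\<lambda>A B. (\<Sum>v\<in>V. of_bool (A \<inter> N v = {}))\<^sup>2) =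
        (\<Sum>u\<in>V. \<Sum>v\<in>V. coupled_prob E q1 q2 (\<lambda>A B. A \<inter> (N u \<union> N v) = {}))"
    unfolding power2_eq_square sum_product coupled_prob_eq_expectation coupled_expectation_sum
    by (simp add: Int_Un_distrib of_bool_conj)
  also have "\<dots> \<le> (\<Sum>u\<in>V. \<Sum>v\<in>V. if u = v then (1 - q1) ^ k else c)"
    using pair by (intro sum_mono) auto
  also have "\<dots> = (\<Sum>u\<in>V. (1 - q1) ^ k + (card V - 1) * c)"
    using assms(4) by (intro sum.cong refl) (simp add: sum.If_cases Diff_eq[symmetric] eq_commute)
  also have "\<dots> \<le> (\<Sum>u\<in>V. (1 - q1) ^ k + card V * c)"
    unfolding c_def using assms(2-4) by (intro sum_mono add_left_mono mult_right_mono) auto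
  also have "\<dots> = \<mu> + \<mu>\<^sup>2 / (1 - q1)"
  proof -
    have "(1 - q1) ^ k * (1 - q1) ^ k = c * (1 - q1)"
      unfolding c_def power_add[symmetric] power_Suc2[symmetric] using assms(5) by (simp add: mult_2)
    moreover have "\<mu>\<^sup>2 = card V * card V * ((1 - q1) ^ k * (1 - q1) ^ k)"
      unfolding \<mu>_def by (simp add: power2_eq_square algebra_simps)
    ultimately have "\<mu>\<^sup>2 = card V * (card V * c) * (1 - q1)"
      by (simp only: mult.assoc of_nat_mult)
    then show ?thesis
      unfolding \<mu>_def using assms(3) by (simp add: distrib_left)
  qed
  finally show ?thesis .
qed

text \<open>
  Second moment method for the number X of sets N v missed by A: E X = \<mu> and, since distinct
  N u, N v share at most one element, E X^2 \<le> \<mu> + \<mu>^2 / (1 - q1).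
\<close>

lemma coupled_prob_meets_all_le:
  fixes N :: "'v \<Rightarrow> 'a set set" and q1 q2 :: real
  assumes "finite E" "0 \<le> q1" "q1 \<le> q2" "q2 \<le> 1" "q1 < 1" "finite V" "V \<noteq> {}" "1 \<le> k"
    and N: "\<And>v. v \<in> V \<Longrightarrow> N v \<subseteq> E \<and> card (N v) = k"
    and overlap: "\<And>u v. u \<in> V \<Longrightarrow> v \<in> V \<Longrightarrow> u \<noteq> v \<Longrightarrow> card (N u \<inter> N v) \<le> 1"
  shows "coupled_prob E q1 q2 (\<lambda>A B. \<forall>v\<in>V. A \<inter> N v \<noteq> {}) \<le>
           1 / (card V * (1 - q1) ^ k) + q1 / (1 - q1)"
proof -
  define X where "X A B = (\<Sum>v\<in>V. of_bool (A \<inter> N v = {}) :: real)" for A B :: "'a set set"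
  define \<mu> where "\<mu> = card V * (1 - q1) ^ k"
  have mean: "coupled_expectation E q1 q2 X = \<mu>"
    unfolding X_def \<mu>_def coupled_expectation_sum coupled_prob_eq_expectation[symmetric]
    using coupled_prob_avoid[OF assms(1) empty_subsetI] N by simp
  have second: "coupled_expectation E q1 q2 (\<lambda>A B. X A B ^ 2) \<le> \<mu> + \<mu>\<^sup>2 / (1 - q1)"
    unfolding X_def \<mu>_def by (rule coupled_expectation_missed_sq_le) (use assms N overlap in auto)
  have "0 < \<mu>" unfolding \<mu>_def using assms(5-7) by (simp add: card_gt_0_iff)
  have "coupled_prob E q1 q2 (\<lambda>A B. \<forall>v\<in>V. A \<inter> N v \<noteq> {}) = coupled_prob E q1 q2 (\<lambda>A B. X A B = 0)"
    unfolding X_def using assms(6)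
    by (intro arg_cong[where f = "coupled_prob E q1 q2"] ext) (auto simp: sum_nonneg_eq_0_iff)
  also have "\<dots> \<le> (\<mu> + \<mu>\<^sup>2 / (1 - q1) - \<mu>\<^sup>2) / \<mu>\<^sup>2"
  proof -
    have "(coupled_expectation E q1 q2 (\<lambda>A B. X A B ^ 2) - \<mu>\<^sup>2) / \<mu>\<^sup>2 \<le>
          (\<mu> + \<mu>\<^sup>2 / (1 - q1) - \<mu>\<^sup>2) / \<mu>\<^sup>2"
      using second by (intro divide_right_mono) auto
    then show ?thesis
      using coupled_prob_eq_zero_le_variance[OF assms(1-4), of X] mean \<open>0 < \<mu>\<close> by simp
  qed
  also have "\<dots> = 1 / \<mu> + q1 / (1 - q1)"
    using \<open>0 < \<mu>\<close> assms(5) by (simp add: field_simps power2_eq_square)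
  finally show ?thesis unfolding \<mu>_def .
qed

section \<open>Isolated vertices of regular graphs\<close>

definition incident_edges :: "'a set set \<Rightarrow> 'a \<Rightarrow> 'a set set" where
  "incident_edges E v = {e\<in>E. v \<in> e}"

lemma simple_graph_finite_edges:
  assumes "simple_graph V E"
  shows "finite E"
proof -
  have "E \<subseteq> Pow V" "finite V" using assms unfolding simple_graph_def by auto
  then show ?thesis by (simp add: finite_subset)
qed

lemma regular_card_incident_edges:
  "regular V E k \<Longrightarrow> v \<in> V \<Longrightarrow> card (incident_edges E v) = k"
  unfolding regular_def degree_def incident_edges_def by simp

lemma isolated_iff_incident_edges:
  "A \<subseteq> E \<Longrightarrow> isolated V A v \<longleftrightarrow> v \<in> V \<and> A \<inter> incident_edges E v = {}"
  unfolding isolated_def incident_edges_def by auto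

lemma simple_graph_card_incident_edges_Int:
  assumes "simple_graph V E" "u \<noteq> v"
  shows "card (incident_edges E u \<inter> incident_edges E v) \<le> 1"
proof -
  have "incident_edges E u \<inter> incident_edges E v \<subseteq> {{u, v}}"
  proof
    fix e assume "e \<in> incident_edges E u \<inter> incident_edges E v"
    then have "e \<in> E" "u \<in> e" "v \<in> e" unfolding incident_edges_def by auto
    then obtain x y where "e = {x, y}" using assms(1) unfolding simple_graph_def by blast
    then show "e \<in> {{u, v}}" using \<open>u \<in> e\<close> \<open>v \<in> e\<close> assms(2) by auto
  qed
  then show ?thesis using card_mono[of "{{u, v}}"] by simp
qed

lemma regular_card_edges_le:
  assumes "simple_graph V E" "regular V E k"
  shows "card E \<le> card V * k"
proof -
  have "finite V" using assms(1) unfolding simple_graph_def by simp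
  have "E \<subseteq> (\<Union>v\<in>V. incident_edges E v)"
  proof
    fix e assume "e \<in> E"
    then obtain x y where "e = {x, y}" "x \<in> V" using assms(1) unfolding simple_graph_def by auto
    then show "e \<in> (\<Union>v\<in>V. incident_edges E v)" using \<open>e \<in> E\<close> unfolding incident_edges_def by auto
  qed
  then have "card E \<le> card (\<Union>v\<in>V. incident_edges E v)"
    using \<open>finite V\<close> simple_graph_finite_edges[OF assms(1)]
    by (intro card_mono) (auto simp: incident_edges_def)
  also have "\<dots> \<le> (\<Sum>v\<in>V. card (incident_edges E v))"
    using \<open>finite V\<close> by (rule card_UN_le)
  also have "\<dots> = card V * k"
    using regular_card_incident_edges[OF assms(2)] by simp
  finally show ?thesis .
qed

lemma regular_graph_isolated_G1_not_G2_prob_ge: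
  fixes V :: "'a set" and q1 q2 :: real
  assumes sg: "simple_graph V E" and reg: "regular V E k" and "1 \<le> k" "V \<noteq> {}"
    and q: "0 \<le> q1" "q1 \<le> q2" "q2 \<le> 1" "q1 < 1"
  shows "1 - (1 / (card V * (1 - q1) ^ k) + q1 / (1 - q1)) - card V * (1 - q2) ^ k \<le>
           coupled_prob E q1 q2 (\<lambda>A B. (\<exists>v. isolated V A v) \<and> \<not> (\<exists>v. isolated V B v))"
proof -
  let ?N = "incident_edges E"
  have "finite V" using sg unfolding simple_graph_def by simp
  have "finite E" using sg by (rule simple_graph_finite_edges)
  have N: "?N v \<subseteq> E \<and> card (?N v) = k" if "v \<in> V" for v
    using regular_card_incident_edges[OF reg that] by (auto simp: incident_edges_def)
  have "coupled_prob E q1 q2 (\<lambda>A B. \<not> ((\<exists>v. isolated V A v) \<and> \<not> (\<exists>v. isolated V B v))) \<le>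
        coupled_prob E q1 q2 (\<lambda>A B. (\<forall>v\<in>V. A \<inter> ?N v \<noteq> {}) \<or>
                                    (\<exists>v\<in>V. A \<inter> ?N v = {} \<and> (B - A) \<inter> ?N v = {}))"
  proof (rule coupled_prob_mono[OF q(1-3)])
    fix A B assume AB: "A \<subseteq> B" "B \<subseteq> E"
    assume "\<not> ((\<exists>v. isolated V A v) \<and> \<not> (\<exists>v. isolated V B v))"
    then consider "\<forall>v. \<not> isolated V A v" | v where "isolated V B v" by blast
    then show "(\<forall>v\<in>V. A \<inter> ?N v \<noteq> {}) \<or> (\<exists>v\<in>V. A \<inter> ?N v = {} \<and> (B - A) \<inter> ?N v = {})"
    proof cases
      case 1
      then show ?thesis using AB isolated_iff_incident_edges[of A E V] by auto
    next
      case 2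
      then have "v \<in> V" "B \<inter> ?N v = {}" using AB(2) isolated_iff_incident_edges[of B E V] by auto
      then show ?thesis using AB(1) by blast
    qed
  qed
  also have "\<dots> \<le> coupled_prob E q1 q2 (\<lambda>A B. \<forall>v\<in>V. A \<inter> ?N v \<noteq> {}) +
      (\<Sum>v\<in>V. coupled_prob E q1 q2 (\<lambda>A B. A \<inter> ?N v = {} \<and> (B - A) \<inter> ?N v = {}))"
    using coupled_prob_disj_le[OF q(1-3)] coupled_prob_Bex_le[OF q(1-3) \<open>finite V\<close>]
    by (rule add_left_mono[THEN [2] order_trans])
  also have "\<dots> \<le> (1 / (card V * (1 - q1) ^ k) + q1 / (1 - q1)) + card V * (1 - q2) ^ k"
  proof (rule add_mono)
    show "coupled_prob E q1 q2 (\<lambda>A B. \<forall>v\<in>V. A \<inter> ?N v \<noteq> {}) \<le>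
          1 / (card V * (1 - q1) ^ k) + q1 / (1 - q1)"
      using simple_graph_card_incident_edges_Int[OF sg] N \<open>finite V\<close> \<open>finite E\<close> assms(3-)
      by (intro coupled_prob_meets_all_le) auto
    show "(\<Sum>v\<in>V. coupled_prob E q1 q2 (\<lambda>A B. A \<inter> ?N v = {} \<and> (B - A) \<inter> ?N v = {})) \<le>
          card V * (1 - q2) ^ k"
      using coupled_prob_avoid[OF \<open>finite E\<close> order_refl] N by simp
  qed
  finally show ?thesis
    unfolding coupled_prob_compl[OF \<open>finite E\<close>] by linarith
qed

lemma regular_graph_no_G2_edge_between_G1_isolated_prob_ge:
  fixes V :: "'a set" and q1 q2 :: real
  assumes sg: "simple_graph V E" and reg: "regular V E k" and "1 \<le> k"
    and q: "0 \<le> q1" "q1 \<le> q2" "q2 \<le> 1"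
  shows "1 - card V * k * ((q2 - q1) * (1 - q1) ^ (2 * k - 2)) \<le>
           coupled_prob E q1 q2 (\<lambda>A B. \<not> (\<exists>x y. isolated V A x \<and> isolated V A y \<and> {x, y} \<in> B))"
proof -
  define F where "F e = {f\<in>E. f \<inter> e \<noteq> {}}" for e
  define c where "c = (q2 - q1) * (1 - q1) ^ (2 * k - 2)"
  have "finite E" using sg by (rule simple_graph_finite_edges)
  have F: "e \<in> F e" "F e \<subseteq> E" "2 * k - 1 \<le> card (F e)" if "e \<in> E" for e
  proof -
    obtain x y where e: "e = {x, y}" "x \<noteq> y" "x \<in> V" "y \<in> V"
      using sg \<open>e \<in> E\<close> unfolding simple_graph_def by blast
    show "e \<in> F e" "F e \<subseteq> E" using that e unfolding F_def by auto
    have "F e = incident_edges E x \<union> incident_edges E y"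
      unfolding F_def incident_edges_def e by auto
    moreover have "finite (incident_edges E x)" "finite (incident_edges E y)"
      using \<open>finite E\<close> unfolding incident_edges_def by auto
    ultimately have "card (F e) + card (incident_edges E x \<inter> incident_edges E y) = 2 * k"
      using card_Un_Int[of "incident_edges E x" "incident_edges E y"]
        regular_card_incident_edges[OF reg] e by simp
    then show "2 * k - 1 \<le> card (F e)"
      using simple_graph_card_incident_edges_Int[OF sg e(2)] by simp
  qed
  have "coupled_prob E q1 q2 (\<lambda>A B. \<exists>x y. isolated V A x \<and> isolated V A y \<and> {x, y} \<in> B) \<le>
        coupled_prob E q1 q2 (\<lambda>A B. \<exists>e\<in>E. A \<inter> F e = {} \<and> e \<in> B - A)"
  proof (rule coupled_prob_mono[OF q])
    fix A B assume "B \<subseteq> E" and "\<exists>x y. isolated V A x \<and> isolated V A y \<and> {x, y} \<in> B"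
    then obtain x y where "isolated V A x" "isolated V A y" "{x, y} \<in> B" by blast
    then show "\<exists>e\<in>E. A \<inter> F e = {} \<and> e \<in> B - A"
      using \<open>B \<subseteq> E\<close> unfolding isolated_def F_def by (intro bexI[of _ "{x, y}"]) auto
  qed
  also have "\<dots> \<le> (\<Sum>e\<in>E. coupled_prob E q1 q2 (\<lambda>A B. A \<inter> F e = {} \<and> e \<in> B - A))"
    by (rule coupled_prob_Bex_le[OF q \<open>finite E\<close>])
  also have "\<dots> = (\<Sum>e\<in>E. (q2 - q1) * (1 - q1) ^ (card (F e) - 1))"
    using coupled_prob_avoid_but_hit[OF \<open>finite E\<close>] F by simp
  also have "\<dots> \<le> (\<Sum>e\<in>E. c)"
    unfolding c_def using F(3) q by (intro sum_mono mult_left_mono power_decreasing) force+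
  also have "\<dots> \<le> card V * k * c"
    using regular_card_edges_le[OF sg reg] q unfolding c_def
    by (simp add: mult_right_mono flip: of_nat_mult)
  finally show ?thesis
    unfolding c_def coupled_prob_compl[OF \<open>finite E\<close>] by linarith
qed

section \<open>Estimates at the threshold\<close>

lemma one_minus_power_le_exp:
  fixes q :: real
  assumes "q \<le> 1"
  shows "(1 - q) ^ k \<le> exp (- (q * k))"
proof -
  have "(1 - q) ^ k \<le> exp (- q) ^ k"
    using assms exp_ge_add_one_self[of "- q"] by (intro power_mono) auto
  then show ?thesis by (simp add: exp_of_nat_mult[symmetric] mult.commute)
qed

lemma exp_le_one_minus_power:
  fixes q :: real
  assumes "0 \<le> q" "q \<le> 1/2"
  shows "exp (- (q * k) - 2 * q\<^sup>2 * k) \<le> (1 - q) ^ k"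
proof -
  have "exp (- (q * k) - 2 * q\<^sup>2 * k) = exp (- q - 2 * q\<^sup>2) ^ k"
    by (simp add: exp_of_nat_mult[symmetric] algebra_simps)
  also have "\<dots> \<le> exp (ln (1 - q)) ^ k"
    using ln_one_minus_pos_lower_bound[OF assms] by (intro power_mono) auto
  also have "\<dots> = (1 - q) ^ k" using assms by simp
  finally show ?thesis .
qed

text \<open>The hypothesis on k n / n enters only through k \<ge> (ln n)^3.\<close>

locale threshold_window =
  fixes n k :: nat
  assumes ln_n_ge_2: "2 \<le> ln (real n)"
    and ln_ln_ln_n_gt_1: "1 < ln (ln (ln (real n)))"
    and ln_ln_ln_ln_n_le: "ln (ln (ln (ln (real n)))) \<le> ln (real n)"
    and k_ge: "ln (real n) ^ 3 \<le> real k"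
begin

text \<open>In this notation p1 n k = (L - a) / k and p2 n k = (L + a) / k, with exp a = t.\<close>

abbreviation L :: real where "L \<equiv> ln (real n)"
abbreviation t :: real where "t \<equiv> ln (ln L)"
abbreviation a :: real where "a \<equiv> ln t"

lemma n_pos: "0 < real n"
  using ln_n_ge_2 by (cases "n = 0") auto

lemma exp_L: "exp L = real n"
  using n_pos by simp

lemma exp_a: "exp a = t"
  using ln_ln_ln_n_gt_1 by simp

lemma a_pos: "0 < a"
  using ln_ln_ln_n_gt_1 by simp

lemma k_pos: "0 < real k"
proof -
  have "2 ^ 3 \<le> L ^ 3" using ln_n_ge_2 by (intro power_mono) auto
  then show ?thesis using k_ge by simp
qed

lemma p1_mult_k: "p1 n k * k = L - a"
  unfolding p1_def using k_pos by simp

lemma p2_mult_k: "p2 n k * k = L + a"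
  unfolding p2_def using k_pos by simp

lemma p1_nonneg: "0 \<le> p1 n k"
  unfolding p1_def using ln_ln_ln_ln_n_le by simp

lemma p1_le_p2: "p1 n k \<le> p2 n k"
  unfolding p1_def p2_def using a_pos k_pos by (simp add: divide_right_mono)

lemma L_div_k_le: "L / k \<le> 1 / L\<^sup>2"
proof -
  have "0 < L ^ 3" using ln_n_ge_2 by simp
  then have "L / k \<le> L / L ^ 3"
    using k_ge ln_n_ge_2 k_pos by (intro divide_left_mono) auto
  also have "\<dots> = 1 / L\<^sup>2"
    using ln_n_ge_2 by (simp add: power2_eq_square power3_eq_cube)
  finally show ?thesis .
qed

lemma p1_le: "p1 n k \<le> 1 / L\<^sup>2"
proof -
  have "p1 n k \<le> L / k"
    unfolding p1_def using a_pos k_pos by (simp add: divide_right_mono)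
  then show ?thesis using L_div_k_le by linarith
qed

lemma p2_le: "p2 n k \<le> 2 / L\<^sup>2"
proof -
  have "p2 n k \<le> 2 * (L / k)"
    unfolding p2_def using ln_ln_ln_ln_n_le k_pos by (simp add: divide_right_mono)
  then show ?thesis using L_div_k_le by linarith
qed

lemma two_div_L_sq_le: "2 / L\<^sup>2 \<le> 1/2"
proof -
  have "2\<^sup>2 \<le> L\<^sup>2" "0 < L\<^sup>2"
    using ln_n_ge_2 power_mono[of 2 L 2] by auto
  then show ?thesis by (simp add: field_simps)
qed

lemma p1_le_half: "p1 n k \<le> 1/2"
  using p1_le two_div_L_sq_le by (simp add: field_simps)

lemma p2_le_one: "p2 n k \<le> 1"
  using p2_le two_div_L_sq_le by linarith

lemma p1_odds_le: "p1 n k / (1 - p1 n k) \<le> 2 / L\<^sup>2"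
proof -
  have "p1 n k * (2 * p1 n k) \<le> p1 n k * 1"
    using p1_nonneg p1_le_half by (intro mult_left_mono) auto
  then have "p1 n k \<le> 2 * p1 n k * (1 - p1 n k)"
    by (simp add: algebra_simps)
  then have "p1 n k / (1 - p1 n k) \<le> 2 * p1 n k"
    using p1_le_half by (simp add: divide_simps)
  then show ?thesis using p1_le by simp
qed

lemma isolated_G2_mean_le: "real (2 * n) * (1 - p2 n k) ^ k \<le> 2 / t"
proof -
  have "(1 - p2 n k) ^ k \<le> exp (- (L + a))"
    using one_minus_power_le_exp[OF p2_le_one, of k] p2_mult_k by simp
  also have "\<dots> = 1 / (real n * t)"
    unfolding exp_minus exp_add exp_L exp_a by (simp add: divide_inverse)
  finally have "real (2 * n) * (1 - p2 n k) ^ k \<le> real (2 * n) * (1 / (real n * t))"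
    using n_pos by (intro mult_left_mono) auto
  also have "\<dots> = 2 / t" using n_pos by simp
  finally show ?thesis .
qed

lemma isolated_G1_mean_inverse_le: "1 / (real (2 * n) * (1 - p1 n k) ^ k) \<le> 2 / t"
proof -
  have "(p1 n k)\<^sup>2 * k = p1 n k * (L - a)"
    using p1_mult_k by (simp add: power2_eq_square)
  also have "\<dots> \<le> (1 / L\<^sup>2) * L"
    using p1_le p1_nonneg a_pos ln_ln_ln_ln_n_le by (intro mult_mono) auto
  also have "\<dots> \<le> 1 / 2"
    using ln_n_ge_2 by (simp add: power2_eq_square)
  finally have "exp (- L + a - 1) \<le> exp (- (p1 n k * k) - 2 * (p1 n k)\<^sup>2 * k)"
    using p1_mult_k by simp
  also have "\<dots> \<le> (1 - p1 n k) ^ k"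
    by (rule exp_le_one_minus_power[OF p1_nonneg p1_le_half])
  finally have "t / (real n * exp 1) \<le> (1 - p1 n k) ^ k"
    using exp_L exp_a by (simp add: exp_diff exp_add exp_minus field_simps)
  then have "2 * t / exp 1 \<le> real (2 * n) * (1 - p1 n k) ^ k"
    using n_pos by (simp add: field_simps)
  moreover have "0 < 2 * t / exp 1" using ln_ln_ln_n_gt_1 by simp
  ultimately have "1 / (real (2 * n) * (1 - p1 n k) ^ k) \<le> exp 1 / (2 * t)"
    using frac_le[of 1 1 "2 * t / exp 1"] by simp
  also have "\<dots> \<le> 2 / t"
    using exp_le ln_ln_ln_n_gt_1 by (simp add: field_simps)
  finally show ?thesis .
qed

lemma G2_edge_between_G1_isolated_mean_le:
  "real (2 * n) * k * ((p2 n k - p1 n k) * (1 - p1 n k) ^ (2 * k - 2)) \<le> 16 * a * t\<^sup>2 / n"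
proof -
  have "1 / 4 \<le> (1 - p1 n k)\<^sup>2"
    using p1_le_half power_mono[of "1/2" "1 - p1 n k" 2] by (simp add: power2_eq_square)
  then have "(1 - p1 n k) ^ (2 * k - 2) * (1 / 4) \<le> (1 - p1 n k) ^ (2 * k - 2) * (1 - p1 n k)\<^sup>2"
    using p1_le_half by (intro mult_left_mono) auto
  also have "\<dots> = (1 - p1 n k) ^ (2 * k)"
  proof -
    have "2 * k = (2 * k - 2) + 2" using k_pos by simp
    then show ?thesis by (metis power_add)
  qed
  also have "\<dots> \<le> exp (- (2 * (L - a)))"
  proof -
    have "- (p1 n k * real (2 * k)) = - (2 * (L - a))" using p1_mult_k by simp
    then show ?thesis using one_minus_power_le_exp[of "p1 n k" "2 * k"] p1_le_half by simp
  qed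
  also have "\<dots> = exp (a - L) ^ 2"
    using exp_of_nat_mult[of 2 "a - L"] by (simp add: algebra_simps)
  also have "\<dots> = (t / n)\<^sup>2"
    unfolding exp_diff exp_L exp_a ..
  finally have decay: "(1 - p1 n k) ^ (2 * k - 2) \<le> 4 * (t / n)\<^sup>2" by simp
  have "(p2 n k - p1 n k) * k = 2 * a"
    using p1_mult_k p2_mult_k by (simp add: algebra_simps)
  then have "real (2 * n) * k * ((p2 n k - p1 n k) * (1 - p1 n k) ^ (2 * k - 2)) =
        real (2 * n) * (2 * a) * (1 - p1 n k) ^ (2 * k - 2)"
    by (metis mult.commute mult.left_commute)
  also have "\<dots> \<le> real (2 * n) * (2 * a) * (4 * (t / n)\<^sup>2)"
    using decay a_pos by (intro mult_left_mono) auto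
  also have "\<dots> = 16 * a * t\<^sup>2 / n"
    using n_pos by (simp add: power2_eq_square field_simps)
  finally show ?thesis .
qed

lemma coupled_prob_p1_p2_le_one: "finite E \<Longrightarrow> coupled_prob E (p1 n k) (p2 n k) P \<le> 1"
  by (rule coupled_prob_le_one[OF _ p1_nonneg p1_le_p2 p2_le_one])

lemma isolated_G1_not_G2_prob_ge:
  assumes "simple_graph {..<2*n} E" "regular {..<2*n} E k"
  shows "1 - (4 / t + 2 / L\<^sup>2) \<le> coupled_prob E (p1 n k) (p2 n k)
           (\<lambda>A B. (\<exists>v. isolated {..<2*n} A v) \<and> \<not> (\<exists>v. isolated {..<2*n} B v))"
proof -
  have "0 \<in> {..<2*n}" using n_pos by simp
  then have V: "{..<2*n} \<noteq> {}" by blast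
  have "1 \<le> k" "p1 n k < 1" using k_pos p1_le_half by auto
  then have "1 - (1 / (real (2 * n) * (1 - p1 n k) ^ k) + p1 n k / (1 - p1 n k))
      - real (2 * n) * (1 - p2 n k) ^ k \<le> coupled_prob E (p1 n k) (p2 n k)
           (\<lambda>A B. (\<exists>v. isolated {..<2*n} A v) \<and> \<not> (\<exists>v. isolated {..<2*n} B v))"
    using regular_graph_isolated_G1_not_G2_prob_ge[OF assms _ V p1_nonneg p1_le_p2 p2_le_one] by simp
  then show ?thesis
    using isolated_G1_mean_inverse_le p1_odds_le isolated_G2_mean_le by linarith
qed

lemma no_G2_edge_between_G1_isolated_prob_ge:
  assumes "simple_graph {..<2*n} E" "regular {..<2*n} E k"
  shows "1 - 16 * a * t\<^sup>2 / n \<le> coupled_prob E (p1 n k) (p2 n k)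
           (\<lambda>A B. \<not> (\<exists>x y. isolated {..<2*n} A x \<and> isolated {..<2*n} A y \<and> {x, y} \<in> B))"
  using regular_graph_no_G2_edge_between_G1_isolated_prob_ge[OF assms _ p1_nonneg p1_le_p2 p2_le_one]
    G2_edge_between_G1_isolated_mean_le k_pos
  by simp

end

lemma eventually_threshold_window:
  fixes k :: "nat \<Rightarrow> nat"
  assumes "filterlim (\<lambda>n. (real (k n) / real n) * ln (real n) powr (1/3)) at_top sequentially"
  shows "\<forall>\<^sub>F n in sequentially. threshold_window n (k n)"
proof -
  have "\<forall>\<^sub>F n in sequentially. 1 \<le> (real (k n) / real n) * ln (real n) powr (1/3)"
    using assms unfolding filterlim_at_top by blast
  moreover have "\<forall>\<^sub>F n in sequentially. 2 \<le> ln (real n)" by real_asymp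
  moreover have "\<forall>\<^sub>F n in sequentially. 1 < ln (ln (ln (real n)))" by real_asymp
  moreover have "\<forall>\<^sub>F n in sequentially. ln (ln (ln (ln (real n)))) \<le> ln (real n)" by real_asymp
  moreover have "\<forall>\<^sub>F n in sequentially. ln (real n) ^ 3 \<le> real n / ln (real n) powr (1/3)"
    by real_asymp
  ultimately show ?thesis
  proof eventually_elim
    case (elim n)
    then have "0 < real n" "0 < ln (real n) powr (1/3)" by (auto intro!: Nat.gr0I)
    then have "real n / ln (real n) powr (1/3) \<le> real (k n)"
      using elim(1) by (simp add: field_simps)
    then show ?case using elim by unfold_locales linarith+
  qed
qed

theorem claim3p2:
  fixes G :: "nat \<Rightarrow> nat set set" and k :: "nat \<Rightarrow> nat"
  assumes graphs: "\<forall>n. simple_graph {..<2*n} (G n) \<and> bipartite {..<2*n} (G n)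
                        \<and> regular {..<2*n} (G n) (k n)"
    and delta: "filterlim (\<lambda>n. (real (k n) / real n) * ln (real n) powr (1/3)) at_top sequentially"
  shows "((\<lambda>n. coupled_prob (G n) (p1 n (k n)) (p2 n (k n))
            (\<lambda>A B. (\<exists>v. isolated {..<2*n} A v) \<and> \<not> (\<exists>v. isolated {..<2*n} B v)))
           \<longlonglongrightarrow> 1) \<and>
         ((\<lambda>n. coupled_prob (G n) (p1 n (k n)) (p2 n (k n))
            (\<lambda>A B. \<not> (\<exists>x y. isolated {..<2*n} A x \<and> isolated {..<2*n} A y \<and> {x, y} \<in> B)))
           \<longlonglongrightarrow> 1)"
proof -
  define P1 where "P1 n = coupled_prob (G n) (p1 n (k n)) (p2 n (k n))
    (\<lambda>A B. (\<exists>v. isolated {..<2*n} A v) \<and> \<not> (\<exists>v. isolated {..<2*n} B v))" for n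
  define P2 where "P2 n = coupled_prob (G n) (p1 n (k n)) (p2 n (k n))
    (\<lambda>A B. \<not> (\<exists>x y. isolated {..<2*n} A x \<and> isolated {..<2*n} A y \<and> {x, y} \<in> B))" for n
  have bounds: "\<forall>\<^sub>F n in sequentially.
      1 - (4 / ln (ln (ln (real n))) + 2 / (ln (real n))\<^sup>2) \<le> P1 n \<and> P1 n \<le> 1 \<and>
      1 - 16 * ln (ln (ln (ln (real n)))) * (ln (ln (ln (real n))))\<^sup>2 / n \<le> P2 n \<and> P2 n \<le> 1"
    using eventually_threshold_window[OF delta]
  proof eventually_elim
    case (elim n)
    then interpret threshold_window n "k n" .
    have "simple_graph {..<2*n} (G n)" "regular {..<2*n} (G n) (k n)" using graphs by auto
    then show ?case
      unfolding P1_def P2_def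
      using isolated_G1_not_G2_prob_ge no_G2_edge_between_G1_isolated_prob_ge
        coupled_prob_p1_p2_le_one simple_graph_finite_edges by blast
  qed
  have lim1: "(\<lambda>n. 1 - (4 / ln (ln (ln (real n))) + 2 / (ln (real n))\<^sup>2)) \<longlonglongrightarrow> 1"
    by real_asymp
  have lim2: "(\<lambda>n. 1 - 16 * ln (ln (ln (ln (real n)))) * (ln (ln (ln (real n))))\<^sup>2 / n) \<longlonglongrightarrow> 1"
    by real_asymp
  have "P1 \<longlonglongrightarrow> 1"
    by (rule tendsto_sandwich[OF _ _ lim1 tendsto_const]) (use bounds in \<open>eventually_elim, auto\<close>)+
  moreover have "P2 \<longlonglongrightarrow> 1"
    by (rule tendsto_sandwich[OF _ _ lim2 tendsto_const]) (use bounds in \<open>eventually_elim, auto\<close>)+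
  ultimately show ?thesis unfolding P1_def P2_def by blast
qed

end
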